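(* Let $n\ge1$, $\alpha\in(0,n)$, and let $\phi(x)=\Phi(|x|)$ be a radial function on $\mathbb{R}^n$, where $\Phi:[0,\infty)\to[0,\infty)$ is decreasing, such that $\sup_{r>0}\phi^{\alpha}_r(e_1)<\infty$, $e_1=(1,0,\dots,0)$. Then for every finite positive measure $V$ on $\mathbb{R}^n$ absolutely continuous with respect to Lebesgue measure and every fixed $\rho>0$, $$\lim_{t\to0^+}\Big\|\mathcal{M}^{\alpha}_{\phi}(V_t)(\cdot)-\sup_{r>0}\phi^{\alpha}_r(\cdot)\,V(\mathbb{R}^n)\Big\|_{L^{\frac{n}{n-\alpha},\infty}(\mathbb{R}^n\setminus B(0,\rho))}=0.$$
   Context: $\phi^{\alpha}_r(x)=r^{-(n-\alpha)}\phi(x/r)$ and $\mathcal{M}^{\alpha}_{\phi}(\mu)(x)=\sup_{r>0}\frac{1}{r^{n-\alpha}}\int_{\mathbb{R}^n}\phi\big(\frac{x-y}{r}\big)d\mu(y)$. $V_t(E)=V(E/t)$ with $E/t=\{x/t:x\in E\}$. For a measurable set $E$, $\|f\|_{L^{p,\infty}(E)}=\sup_{\lambda>0}\lambda|\{x\in E:|f(x)|>\lambda\}|^{1/p}$. *)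

theory Defs
  imports "HOL-Analysis.Analysis"
begin

definition enn_powr :: "ennreal \<Rightarrow> real \<Rightarrow> ennreal" where
  "enn_powr a p = (if a = \<infinity> then \<infinity> else ennreal (enn2real a powr p))"

text \<open>Outer Lebesgue measure (avoids any measurability issue of level sets).\<close>
definition leb_outer :: "'a::euclidean_space set \<Rightarrow> ennreal" where
  "leb_outer A = (INF B \<in> {B \<in> sets lebesgue. A \<subseteq> B}. emeasure lebesgue B)"

definition weak_Lp_norm :: "real \<Rightarrow> 'a::euclidean_space set \<Rightarrow> ('a \<Rightarrow> ereal) \<Rightarrow> ennreal" where
  "weak_Lp_norm p E f =
     (SUP l \<in> {0<..}. ennreal l * enn_powr (leb_outer {x \<in> E. \<bar>f x\<bar> > ereal l}) (1 / p))"

definition phi_scaled :: "real \<Rightarrow> (real \<Rightarrow> real) \<Rightarrow> real \<Rightarrow> 'a::euclidean_space \<Rightarrow> real" where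
  "phi_scaled \<alpha> \<Phi> r x = r powr (- (real DIM('a) - \<alpha>)) * \<Phi> (norm (x /\<^sub>R r))"

definition frac_max :: "real \<Rightarrow> (real \<Rightarrow> real) \<Rightarrow> 'a::euclidean_space measure \<Rightarrow> 'a \<Rightarrow> ennreal" where
  "frac_max \<alpha> \<Phi> \<mu> x =
     (SUP r \<in> {0<..}. ennreal (r powr (- (real DIM('a) - \<alpha>))) *
        (\<integral>\<^sup>+ y. ennreal (\<Phi> (norm ((x - y) /\<^sub>R r))) \<partial>\<mu>))"

text \<open>V_t(E) = V(E/t): the push-forward of V under x \<mapsto> t x.\<close>
definition dilate_measure :: "real \<Rightarrow> 'a::euclidean_space measure \<Rightarrow> 'a measure" where
  "dilate_measure t V = distr V lborel (\<lambda>x. t *\<^sub>R x)"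

end

theory Submission
  imports Defs
begin

text \<open>Write \<open>\<beta> = n - \<alpha>\<close> and \<open>C = sup\<^sub>r r\<^sup>-\<^sup>\<beta> \<Phi>(1/r)\<close>. By scaling,
  \<open>sup\<^sub>r \<phi>\<^sup>\<alpha>\<^sub>r(x) = C |x|\<^sup>-\<^sup>\<beta>\<close>, and every dilate \<open>r\<^sup>-\<^sup>\<beta> \<Phi>(|z|/r)\<close> is dominated by
  the majorant \<open>K(z) = C |z|\<^sup>-\<^sup>\<beta>\<close>. Fix \<open>R\<close> with \<open>V(|y| > R)\<close> small and split \<open>V\<^sub>t\<close>
  at radius \<open>tR\<close>. For \<open>|x| \<ge> \<rho>\<close> and \<open>h = tR/\<rho>\<close> the inner part moves \<open>x\<close> by at most
  \<open>h|x|\<close>, so \<open>M(V\<^sub>t)(x)\<close> differs from \<open>C |x|\<^sup>-\<^sup>\<beta> V(\<real>\<^sup>n)\<close> by at most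
  \<open>C ((1-h)\<^sup>-\<^sup>\<beta> - (1+h)\<^sup>-\<^sup>\<beta>) |x|\<^sup>-\<^sup>\<beta> V(\<real>\<^sup>n) + C |x|\<^sup>-\<^sup>\<beta> V(|y| > R)\<close> plus the
  potential \<open>K * V\<^sub>t\<close> of the outer part. The first two terms have weak
  \<open>L\<^sup>n\<^sup>/\<^sup>\<beta>\<close> norm \<open>O(h + V(|y| > R))\<close>; the potential obeys the weak type \<open>(1, n/\<beta>)\<close>
  bound, because \<open>K\<close> is integrable near \<open>0\<close> (as \<open>\<beta> < n\<close>) and bounded away from \<open>0\<close>.\<close>

lemma powr_add_le_add_powr:
  fixes x y q :: real
  assumes "0 \<le> x" "0 \<le> y" "0 < q" "q \<le> 1"
  shows "(x + y) powr q \<le> x powr q + y powr q"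
proof (cases "x + y = 0")
  case True
  with assms show ?thesis by simp
next
  case False
  with assms have s: "0 < x + y" by simp
  have le_powr: "u \<le> u powr q" if "0 \<le> u" "u \<le> 1" for u :: real
    using powr_mono'[of q 1 u] that assms by simp
  have "(x + y) powr q = (x + y) powr q * (x / (x + y) + y / (x + y))"
    using s by (simp add: add_divide_distrib[symmetric])
  also have "\<dots> \<le> (x + y) powr q * ((x / (x + y)) powr q + (y / (x + y)) powr q)"
    using s assms by (intro mult_left_mono add_mono le_powr) auto
  also have "\<dots> = x powr q + y powr q"
    using s assms by (simp add: powr_divide distrib_left)
  finally show ?thesis .
qed

lemma less_powr_of_less_mult_powr:
  fixes s c y \<beta> :: real
  assumes "0 < s" "0 < y" "0 < \<beta>" "y < c * s powr - \<beta>"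
  shows "s < (c / y) powr (1 / \<beta>)"
proof (rule ccontr)
  assume "\<not> s < (c / y) powr (1 / \<beta>)"
  moreover have c: "0 < c"
  proof (rule ccontr)
    assume "\<not> 0 < c"
    then have "c * s powr - \<beta> \<le> 0" by (simp add: mult_nonpos_nonneg)
    with assms show False by simp
  qed
  ultimately have "s powr - \<beta> \<le> ((c / y) powr (1 / \<beta>)) powr - \<beta>"
    using assms by (intro powr_mono2') auto
  also have "\<dots> = y / c"
    using assms c by (simp add: powr_powr powr_minus)
  finally have "c * s powr - \<beta> \<le> y"
    using c by (simp add: field_simps)
  with assms show False by simp
qed

lemma cSUP_mult_left_nonneg:
  fixes c :: real
  assumes "0 \<le> c" "A \<noteq> {}" "bdd_above (f ` A)"
  shows "(SUP x\<in>A. c * f x) = c * (SUP x\<in>A. f x)"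
proof -
  have "c * Sup (f ` A) = (SUP y\<in>f ` A. c * y)"
  proof (rule continuous_at_Sup_mono)
    show "mono ((*) c)" using assms(1) by (simp add: mono_def mult_left_mono)
    show "continuous (at_left (Sup (f ` A))) ((*) c)"
      unfolding continuous_within by (intro tendsto_mult_left tendsto_ident_at)
  qed (use assms in auto)
  then show ?thesis by (simp add: image_image)
qed

lemma ennreal_cSup:
  assumes "S \<noteq> {}" "bdd_above S"
  shows "ennreal (Sup S) = (SUP s\<in>S. ennreal s)"
proof (rule continuous_at_Sup_mono)
  show "continuous (at_left (Sup S)) ennreal"
    unfolding continuous_within by (intro tendsto_ennrealI tendsto_ident_at)
  show "mono ennreal" by (rule monoI) (rule ennreal_leI)
qed (fact assms)+

lemma ennreal_le_suminf: "f k \<le> (\<Sum>i. f i :: ennreal)"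
proof (rule ccontr)
  assume "\<not> f k \<le> (\<Sum>i. f i)"
  then have "(\<Sum>i. f i) < f k" by (simp add: not_le)
  from ennreal_suminf_lessD[OF this, of k] show False by simp
qed

lemma ennreal_half_le_of_less_add:
  assumes "ennreal l < y + ennreal (l / 2)" "0 \<le> l"
  shows "ennreal (l / 2) \<le> y"
proof (rule ccontr)
  assume "\<not> ennreal (l / 2) \<le> y"
  then have "y + ennreal (l / 2) \<le> ennreal (l / 2) + ennreal (l / 2)"
    by (intro add_right_mono) simp
  also have "\<dots> = ennreal l"
    using assms(2) by (simp flip: ennreal_plus)
  finally show False using assms(1) by simp
qed

lemma enn2ereal_abs_diff_split:
  fixes M T :: ennreal and a L U E l :: real
  assumes upper: "M \<le> ennreal U + T" and lower: "ennreal L \<le> M"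
    and "0 \<le> U" "U - a \<le> E" "a - L \<le> E" "0 < l"
    and gt: "ereal l < \<bar>enn2ereal M - ereal a\<bar>"
  shows "l / 2 < E \<or> ennreal (l / 2) < T"
proof (cases "T = \<infinity>")
  case False
  then obtain T0 where T0: "T = ennreal T0" "0 \<le> T0" by (cases T) auto
  with upper \<open>0 \<le> U\<close> have "M \<le> ennreal (U + T0)" by (simp add: ennreal_plus)
  then obtain u where u: "M = ennreal u" "0 \<le> u" "u \<le> U + T0"
    using \<open>0 \<le> U\<close> T0(2) by (cases M) (auto simp: top_unique simp del: ennreal_plus)
  have "L \<le> u"
    using lower u by (cases "0 \<le> L") (auto simp: ennreal_le_iff)
  have "l < \<bar>u - a\<bar>" using gt u by simp
  also have "\<bar>u - a\<bar> \<le> E + T0" using assms \<open>L \<le> u\<close> u T0 by linarith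
  finally have "l / 2 < E \<or> l / 2 < T0" by linarith
  then show ?thesis using T0 \<open>0 < l\<close> by (auto intro: ennreal_lessI)
qed simp

lemma dyadic_shell_exists:
  fixes s \<delta> :: real
  assumes "0 < s" "s < \<delta>"
  obtains k :: nat where "\<delta> / 2 ^ Suc k \<le> s" "s < \<delta> / 2 ^ k"
proof -
  obtain n :: nat where "\<delta> / s < 2 ^ n"
    using real_arch_pow[of 2 "\<delta> / s"] by auto
  then have "\<delta> / 2 ^ n \<le> s"
    using assms by (simp add: divide_le_eq mult.commute less_imp_le pos_divide_less_eq)
  then obtain k where "\<not> \<delta> / 2 ^ k \<le> s" "\<delta> / 2 ^ Suc k \<le> s"
    using ex_least_nat_less[of "\<lambda>k. \<delta> / 2 ^ k \<le> s" n] assms by auto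
  with that show ?thesis by simp
qed

lemma dyadic_ball_term:
  fixes \<delta> \<beta> :: real and n k :: nat
  assumes "0 < \<delta>"
  shows "(\<delta> / 2 ^ Suc k) powr - \<beta> * (\<delta> / 2 ^ k) ^ n =
    2 powr \<beta> * \<delta> powr (real n - \<beta>) * (2 powr (\<beta> - real n)) ^ k"
proof -
  define u where "u = \<delta> / 2 ^ k"
  have u: "0 < u" using assms by (simp add: u_def)
  have "(\<delta> / 2 ^ Suc k) powr - \<beta> = 2 powr \<beta> * u powr - \<beta>"
    using u by (simp add: u_def powr_divide powr_minus powr_mult field_simps)
  moreover have "(\<delta> / 2 ^ k) ^ n = u powr real n"
    using u by (simp add: u_def powr_realpow)
  moreover have "(2 powr (\<beta> - real n)) ^ k = 1 / (2 ^ k) powr (real n - \<beta>)"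
    by (simp add: powr_realpow[symmetric] powr_powr powr_minus_divide[symmetric] algebra_simps)
  then have "u powr - \<beta> * u powr real n = \<delta> powr (real n - \<beta>) * (2 powr (\<beta> - real n)) ^ k"
    using assms by (simp add: u_def powr_add[symmetric] powr_divide)
  ultimately show ?thesis by (simp add: mult.assoc)
qed

section \<open>Measures on Euclidean space and convolution\<close>

lemma finite_measure_compl_cball_small:
  fixes \<mu> :: "'a::euclidean_space measure"
  assumes sets: "sets \<mu> = sets borel" and "finite_measure \<mu>" and e: "0 < e"
  obtains R where "0 \<le> R" "emeasure \<mu> (- cball 0 R) < ennreal e"
proof -
  interpret finite_measure \<mu> by fact
  define A where "A k = - cball (0::'a) (real k)" for k :: nat
  have "(\<lambda>k. emeasure \<mu> (A k)) \<longlonglongrightarrow> emeasure \<mu> (\<Inter>k. A k)"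
  proof (rule Lim_emeasure_decseq)
    show "range A \<subseteq> sets \<mu>" unfolding sets A_def by (auto intro: borel_open)
    show "antimono_on UNIV A" by (rule antimonoI) (auto simp: A_def)
  qed (simp add: emeasure_eq_measure)
  moreover have "(\<Inter>k. A k) = {}"
  proof -
    have "x \<notin> (\<Inter>k. A k)" for x
    proof -
      obtain k where "norm x \<le> real k" using real_arch_simple by blast
      then show ?thesis by (auto simp: A_def)
    qed
    then show ?thesis by blast
  qed
  ultimately have "\<forall>\<^sub>F k in sequentially. emeasure \<mu> (A k) < ennreal e"
    using e by (intro order_tendstoD(2)) auto
  then obtain k where "emeasure \<mu> (A k) < ennreal e"
    by (auto simp: eventually_sequentially)
  with that[of "real k"] show ?thesis by (simp add: A_def)
qed

lemma nn_integral_lborel_translate: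
  fixes f :: "'a::euclidean_space \<Rightarrow> ennreal"
  assumes [measurable]: "f \<in> borel_measurable borel"
  shows "(\<integral>\<^sup>+x. f (x - c) \<partial>lborel) = (\<integral>\<^sup>+x. f x \<partial>lborel)"
proof -
  have "(\<integral>\<^sup>+x. f x \<partial>lborel) = (\<integral>\<^sup>+x. f x \<partial>distr lborel borel ((+) (- c)))"
    by (simp add: lborel_distr_plus)
  also have "\<dots> = (\<integral>\<^sup>+x. f (- c + x) \<partial>lborel)"
    by (rule nn_integral_distr) auto
  finally show ?thesis by simp
qed

lemma measurable_pair_lborel_cong:
  assumes "sets \<mu> = sets (borel :: 'a::euclidean_space measure)"
  shows "measurable (lborel \<Otimes>\<^sub>M \<mu>) N = measurable (lborel \<Otimes>\<^sub>M (lborel :: 'a measure)) N"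
  using assms by (intro measurable_cong_sets sets_pair_measure_cong) simp_all

lemma borel_measurable_convolution:
  fixes G w :: "'a::euclidean_space \<Rightarrow> ennreal"
  assumes [measurable]: "G \<in> borel_measurable borel" "w \<in> borel_measurable borel"
    and sets: "sets \<mu> = sets borel" and "sigma_finite_measure \<mu>"
  shows "(\<lambda>x. \<integral>\<^sup>+z. G (x - z) * w z \<partial>\<mu>) \<in> borel_measurable borel"
proof -
  interpret sigma_finite_measure \<mu> by fact
  have "(\<lambda>(x, z). G (x - z) * w z) \<in> borel_measurable (lborel \<Otimes>\<^sub>M \<mu>)"
    unfolding measurable_pair_lborel_cong[OF sets] by measurable
  then show ?thesis using borel_measurable_nn_integral by simp
qed

lemma nn_integral_lborel_convolution:
  fixes G w :: "'a::euclidean_space \<Rightarrow> ennreal"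
  assumes [measurable]: "G \<in> borel_measurable borel" "w \<in> borel_measurable borel"
    and sets: "sets \<mu> = sets borel" and "sigma_finite_measure \<mu>"
  shows "(\<integral>\<^sup>+x. (\<integral>\<^sup>+z. G (x - z) * w z \<partial>\<mu>) \<partial>lborel) = (\<integral>\<^sup>+x. G x \<partial>lborel) * (\<integral>\<^sup>+z. w z \<partial>\<mu>)"
proof -
  interpret sigma_finite_measure \<mu> by fact
  interpret pair_sigma_finite lborel \<mu> ..
  have "(\<lambda>(x, z). G (x - z) * w z) \<in> borel_measurable (lborel \<Otimes>\<^sub>M \<mu>)"
    unfolding measurable_pair_lborel_cong[OF sets] by measurable
  then have "(\<integral>\<^sup>+x. (\<integral>\<^sup>+z. G (x - z) * w z \<partial>\<mu>) \<partial>lborel) = (\<integral>\<^sup>+z. (\<integral>\<^sup>+x. G (x - z) * w z \<partial>lborel) \<partial>\<mu>)"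
    by (simp add: Fubini')
  also have "\<dots> = (\<integral>\<^sup>+z. (\<integral>\<^sup>+x. G x \<partial>lborel) * w z \<partial>\<mu>)"
  proof (rule nn_integral_cong)
    fix z
    have "(\<integral>\<^sup>+x. G (x - z) * w z \<partial>lborel) = (\<integral>\<^sup>+x. G (x - z) \<partial>lborel) * w z"
      by (rule nn_integral_multc) measurable
    then show "(\<integral>\<^sup>+x. G (x - z) * w z \<partial>lborel) = (\<integral>\<^sup>+x. G x \<partial>lborel) * w z"
      by (simp add: nn_integral_lborel_translate)
  qed
  also have "\<dots> = (\<integral>\<^sup>+x. G x \<partial>lborel) * (\<integral>\<^sup>+z. w z \<partial>\<mu>)"
    by (rule nn_integral_cmult) (simp add: measurable_cong_sets[OF sets refl])
  finally show ?thesis .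
qed

lemma emeasure_convolution_ge_le:
  fixes G :: "'a::euclidean_space \<Rightarrow> ennreal"
  assumes [measurable]: "G \<in> borel_measurable borel" and sets: "sets \<mu> = sets borel"
    and "sigma_finite_measure \<mu>" and [measurable]: "S \<in> sets borel" and c: "0 < c"
  shows "emeasure lborel {x. ennreal c \<le> (\<integral>\<^sup>+z. G (x - z) * indicator S z \<partial>\<mu>)} \<le>
    ennreal (1 / c) * ((\<integral>\<^sup>+x. G x \<partial>lborel) * emeasure \<mu> S)"
proof -
  define P where "P x = (\<integral>\<^sup>+z. G (x - z) * indicator S z \<partial>\<mu>)" for x
  have [measurable]: "P \<in> borel_measurable borel"
    unfolding P_def using assms by (intro borel_measurable_convolution) simp_all
  have "{x. ennreal c \<le> P x} \<subseteq> {x \<in> UNIV. 1 \<le> ennreal (1 / c) * P x}"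
  proof safe
    fix x assume "ennreal c \<le> P x"
    then have "ennreal (1 / c) * ennreal c \<le> ennreal (1 / c) * P x"
      by (rule mult_left_mono) simp
    then show "1 \<le> ennreal (1 / c) * P x"
      using c by (simp flip: ennreal_mult)
  qed simp
  then have "emeasure lborel {x. ennreal c \<le> P x} \<le> emeasure lborel {x \<in> UNIV. 1 \<le> ennreal (1 / c) * P x}"
    by (intro emeasure_mono) measurable
  also have "\<dots> \<le> ennreal (1 / c) * (\<integral>\<^sup>+x. P x * indicator UNIV x \<partial>lborel)"
    by (rule nn_integral_Markov_inequality) simp_all
  also have "(\<integral>\<^sup>+x. P x * indicator UNIV x \<partial>lborel) = (\<integral>\<^sup>+x. G x \<partial>lborel) * emeasure \<mu> S"
    using nn_integral_lborel_convolution[OF _ borel_measurable_indicator sets] assms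
    by (simp add: P_def sets)
  finally show ?thesis by (simp add: P_def)
qed

section \<open>Weak Lebesgue quasi-norm and dilation\<close>

lemma leb_outer_le_emeasure:
  assumes "A \<subseteq> B" "B \<in> sets borel"
  shows "leb_outer A \<le> emeasure lborel B"
  unfolding leb_outer_def using assms by (intro INF_lower2[of B]) auto

lemma enn_powr_le_ennreal:
  assumes "a \<le> ennreal c" "0 \<le> c" "0 < q"
  shows "enn_powr a q \<le> ennreal (c powr q)"
proof -
  have "a \<noteq> \<infinity>" using assms(1) by (auto simp: top_unique)
  moreover have "enn2real a \<le> c" using assms(1,2) by (simp add: enn2real_leI)
  ultimately show ?thesis
    using assms(3) by (auto simp: enn_powr_def intro!: ennreal_leI powr_mono2)
qed

lemma weak_Lp_norm_cong:
  assumes "\<And>x. x \<in> E \<Longrightarrow> f x = g x"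
  shows "weak_Lp_norm p E f = weak_Lp_norm p E g"
proof -
  have "{x \<in> E. ereal l < \<bar>f x\<bar>} = {x \<in> E. ereal l < \<bar>g x\<bar>}" for l
    using assms by auto
  then show ?thesis by (simp add: weak_Lp_norm_def)
qed

lemma weak_Lp_norm_le:
  assumes p: "0 < p" and K: "0 \<le> K"
    and level: "\<And>l. 0 < l \<Longrightarrow> leb_outer {x \<in> E. ereal l < \<bar>f x\<bar>} \<le> ennreal (K / l powr p)"
  shows "weak_Lp_norm p E f \<le> ennreal (K powr (1 / p))"
  unfolding weak_Lp_norm_def
proof (rule SUP_least)
  fix l :: real assume "l \<in> {0<..}"
  then have l: "0 < l" by simp
  have "ennreal l * enn_powr (leb_outer {x \<in> E. ereal l < \<bar>f x\<bar>}) (1 / p) \<le> ennreal l * ennreal ((K / l powr p) powr (1 / p))"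
    using level[OF l] K l p by (intro mult_left_mono enn_powr_le_ennreal) auto
  also have "\<dots> = ennreal (K powr (1 / p))"
    using K l p by (simp add: ennreal_mult[symmetric] powr_divide powr_powr)
  finally show "ennreal l * enn_powr (leb_outer {x \<in> E. \<bar>f x\<bar> > ereal l}) (1 / p) \<le> ennreal (K powr (1 / p))"
    by simp
qed

lemma sets_dilate_measure [simp]: "sets (dilate_measure t V) = sets borel"
  by (simp add: dilate_measure_def)

lemma emeasure_dilate_measure_UNIV:
  assumes sets: "sets V = sets borel"
  shows "emeasure (dilate_measure t V) UNIV = emeasure V UNIV"
proof -
  have "space V = UNIV" using sets_eq_imp_space_eq[OF sets] by simp
  then show ?thesis
    unfolding dilate_measure_def
    by (subst emeasure_distr) (simp_all add: measurable_cong_sets[OF sets refl])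
qed

lemma emeasure_dilate_measure_compl_cball:
  assumes sets: "sets V = sets borel" and t: "0 < t"
  shows "emeasure (dilate_measure t V) (- cball 0 (t * R)) = emeasure V (- cball 0 R)"
proof -
  have "(\<lambda>x::'a::euclidean_space. t *\<^sub>R x) -` (- cball 0 (t * R)) = - cball 0 R"
    using t by auto
  moreover have "space V = UNIV" using sets_eq_imp_space_eq[OF sets] by simp
  ultimately show ?thesis
    unfolding dilate_measure_def
    by (subst emeasure_distr) (simp_all add: measurable_cong_sets[OF sets refl])
qed

lemma finite_measure_dilate_measure:
  assumes "sets V = sets borel" "finite_measure V"
  shows "finite_measure (dilate_measure t V)"
  unfolding dilate_measure_def
  by (rule finite_measure.finite_measure_distr[OF assms(2)]) (simp add: measurable_cong_sets[OF assms(1) refl])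

section \<open>Radially decreasing kernels\<close>

locale radial_kernel =
  fixes \<Phi> :: "real \<Rightarrow> real" and \<beta> :: real
  assumes Phi_nonneg: "\<And>s. 0 \<le> s \<Longrightarrow> 0 \<le> \<Phi> s"
    and Phi_decr: "\<And>s s'. 0 \<le> s \<Longrightarrow> s \<le> s' \<Longrightarrow> \<Phi> s' \<le> \<Phi> s"
    and exponent_pos: "0 < \<beta>"
    and profile_bounded: "bdd_above ((\<lambda>r. r powr - \<beta> * \<Phi> (1 / r)) ` {0<..})"
begin

text \<open>\<open>kernel r s\<close> is \<open>\<phi>\<^sup>\<alpha>\<^sub>r(x)\<close> at any \<open>x\<close> with \<open>|x| = s\<close>.\<close>

definition kernel :: "real \<Rightarrow> real \<Rightarrow> real" where
  "kernel r s = r powr - \<beta> * \<Phi> (s / r)"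

definition kernel_const :: real where
  "kernel_const = (SUP r\<in>{0<..}. kernel r 1)"

definition majorant :: "'a::real_normed_vector \<Rightarrow> ennreal" where
  "majorant z = (if z = 0 then \<infinity> else ennreal (kernel_const * norm z powr - \<beta>))"

lemma kernel_nonneg: "0 < r \<Longrightarrow> 0 \<le> s \<Longrightarrow> 0 \<le> kernel r s"
  by (simp add: kernel_def Phi_nonneg)

lemma kernel_antimono: "0 < r \<Longrightarrow> 0 \<le> s \<Longrightarrow> s \<le> s' \<Longrightarrow> kernel r s' \<le> kernel r s"
  by (simp add: kernel_def Phi_decr divide_right_mono mult_left_mono)

lemma kernel_rescale: "0 < s \<Longrightarrow> 0 < u \<Longrightarrow> kernel (s * u) s = s powr - \<beta> * kernel u 1"
  by (simp add: kernel_def powr_mult)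

lemma bdd_above_kernel_one: "bdd_above ((\<lambda>r. kernel r 1) ` {0<..})"
  using profile_bounded by (simp add: kernel_def)

lemma SUP_kernel:
  assumes s: "0 < s"
  shows "(SUP r\<in>{0<..}. kernel r s) = kernel_const * s powr - \<beta>"
proof -
  have img: "(*) s ` {0<..} = {0<..}"
    using image_linear_greaterThan[of s 0 0] s by simp
  have "(SUP r\<in>{0<..}. kernel r s) = (SUP r\<in>(*) s ` {0<..}. kernel r s)"
    by (simp only: img)
  also have "\<dots> = (SUP u\<in>{0<..}. s powr - \<beta> * kernel u 1)"
    using s by (simp only: image_image) (intro SUP_cong refl kernel_rescale, auto)
  also have "\<dots> = s powr - \<beta> * kernel_const"
    unfolding kernel_const_def by (intro cSUP_mult_left_nonneg bdd_above_kernel_one) auto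
  finally show ?thesis by simp
qed

lemma kernel_le_const:
  assumes "0 < r" "0 < s"
  shows "kernel r s \<le> kernel_const * s powr - \<beta>"
proof -
  have "kernel r s = s powr - \<beta> * kernel (r / s) 1"
    using kernel_rescale[of s "r / s"] assms by simp
  also have "\<dots> \<le> s powr - \<beta> * kernel_const"
    unfolding kernel_const_def using assms
    by (intro mult_left_mono cSUP_upper bdd_above_kernel_one) auto
  finally show ?thesis by (simp add: mult.commute)
qed

lemma kernel_const_nonneg: "0 \<le> kernel_const"
  using kernel_le_const[of 1 1] kernel_nonneg[of 1 1] by simp

lemma bdd_above_kernel: "0 < s \<Longrightarrow> bdd_above ((\<lambda>r. kernel r s) ` {0<..})"
  using kernel_le_const by (intro bdd_aboveI2) auto

lemma SUP_phi_scaled: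
  fixes x :: "'a::euclidean_space"
  assumes "x \<noteq> 0"
  shows "(SUP r\<in>{0<..}. phi_scaled (real DIM('a) - \<beta>) \<Phi> r x) = kernel_const * norm x powr - \<beta>"
proof -
  have "(SUP r\<in>{0<..}. phi_scaled (real DIM('a) - \<beta>) \<Phi> r x) = (SUP r\<in>{0<..}. kernel r (norm x))"
    by (rule SUP_cong) (simp_all add: phi_scaled_def kernel_def divide_inverse mult.commute)
  then show ?thesis using SUP_kernel assms by simp
qed

lemma majorant_le:
  assumes "0 < s" "s \<le> norm z"
  shows "majorant z \<le> ennreal (kernel_const * s powr - \<beta>)"
proof -
  have "norm z powr - \<beta> \<le> s powr - \<beta>"
    using assms exponent_pos by (intro powr_mono2') auto
  then show ?thesis
    using assms kernel_const_nonneg by (auto simp: majorant_def intro!: ennreal_leI mult_left_mono)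
qed

lemma kernel_le_majorant: "0 < r \<Longrightarrow> ennreal (kernel r (norm z)) \<le> majorant z"
  by (auto simp: majorant_def intro!: ennreal_leI kernel_le_const)

lemma borel_measurable_majorant [measurable]:
  "(majorant :: 'a::euclidean_space \<Rightarrow> ennreal) \<in> borel_measurable borel"
  unfolding majorant_def by measurable

lemma borel_measurable_Phi_norm [measurable]:
  "(\<lambda>z::'a::euclidean_space. \<Phi> (norm z)) \<in> borel_measurable borel"
proof -
  have "mono (\<lambda>s. - \<Phi> (max s 0))"
    by (rule monoI) (simp add: Phi_decr)
  then have "(\<lambda>s. - (- \<Phi> (max s 0))) \<in> borel_measurable borel"
    by (intro borel_measurable_uminus borel_measurable_mono)
  then have [measurable]: "(\<lambda>s. \<Phi> (max s 0)) \<in> borel_measurable borel"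
    by simp
  have "(\<lambda>z::'a. \<Phi> (max (norm z) 0)) \<in> borel_measurable borel"
    by measurable
  then show ?thesis by simp
qed

subsection \<open>Two-sided pointwise bounds for the maximal function\<close>

lemma frac_max_eq_SUP_kernel:
  fixes \<mu> :: "'a::euclidean_space measure"
  assumes sets: "sets \<mu> = sets borel"
  shows "frac_max (real DIM('a) - \<beta>) \<Phi> \<mu> x =
    (SUP r\<in>{0<..}. \<integral>\<^sup>+y. ennreal (kernel r (norm (x - y))) \<partial>\<mu>)"
  unfolding frac_max_def
proof (intro SUP_cong refl)
  fix r :: real assume "r \<in> {0<..}"
  then have r: "0 < r" by simp
  have "ennreal (r powr - \<beta>) * ennreal (\<Phi> (norm ((x - y) /\<^sub>R r))) = ennreal (kernel r (norm (x - y)))"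
    for y using r by (simp add: kernel_def ennreal_mult Phi_nonneg divide_inverse mult.commute)
  moreover have "(\<lambda>y. ennreal (\<Phi> (norm ((x - y) /\<^sub>R r)))) \<in> borel_measurable \<mu>"
    unfolding measurable_cong_sets[OF sets refl] by measurable
  ultimately show "ennreal (r powr - (real DIM('a) - (real DIM('a) - \<beta>))) *
      (\<integral>\<^sup>+y. ennreal (\<Phi> (norm ((x - y) /\<^sub>R r))) \<partial>\<mu>) =
    (\<integral>\<^sup>+y. ennreal (kernel r (norm (x - y))) \<partial>\<mu>)"
    by (simp add: nn_integral_cmult[symmetric])
qed

lemma frac_max_le:
  fixes \<mu> :: "'a::euclidean_space measure"
  assumes sets: "sets \<mu> = sets borel" and r: "0 \<le> r" "r < norm x"
  shows "frac_max (real DIM('a) - \<beta>) \<Phi> \<mu> x \<le>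
    ennreal (kernel_const * (norm x - r) powr - \<beta>) * emeasure \<mu> (cball 0 r) +
    (\<integral>\<^sup>+z. majorant (x - z) * indicator (- cball 0 r) z \<partial>\<mu>)"
  (is "_ \<le> ennreal ?c * _ + ?T")
proof -
  have cball_sets: "cball 0 r \<in> sets \<mu>" unfolding sets by simp
  have near_meas: "(\<lambda>z. ennreal ?c * indicator (cball 0 r) z) \<in> borel_measurable \<mu>"
    using cball_sets by (intro borel_measurable_times_ennreal measurable_const borel_measurable_indicator) simp_all
  have far_meas: "(\<lambda>z. majorant (x - z) * indicator (- cball 0 r) z) \<in> borel_measurable \<mu>"
    unfolding measurable_cong_sets[OF sets refl] by measurable
  have near: "majorant (x - z) \<le> ennreal ?c" if "z \<in> cball 0 r" for z
  proof (rule majorant_le)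
    show "norm x - r \<le> norm (x - z)"
      using that norm_triangle_ineq2[of x z] by simp
  qed (use r in simp)
  have "(\<integral>\<^sup>+z. ennreal (kernel \<rho> (norm (x - z))) \<partial>\<mu>) \<le> ennreal ?c * emeasure \<mu> (cball 0 r) + ?T"
    if "0 < \<rho>" for \<rho>
  proof -
    have "(\<integral>\<^sup>+z. ennreal (kernel \<rho> (norm (x - z))) \<partial>\<mu>)
        \<le> (\<integral>\<^sup>+z. ennreal ?c * indicator (cball 0 r) z + majorant (x - z) * indicator (- cball 0 r) z \<partial>\<mu>)"
    proof (rule nn_integral_mono)
      fix z
      show "ennreal (kernel \<rho> (norm (x - z))) \<le> ennreal ?c * indicator (cball 0 r) z + majorant (x - z) * indicator (- cball 0 r) z"
        using kernel_le_majorant[OF that, of "x - z"] near[of z] by (cases "z \<in> cball 0 r") auto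
    qed
    also have "\<dots> = ennreal ?c * emeasure \<mu> (cball 0 r) + ?T"
      by (simp only: nn_integral_add[OF near_meas far_meas] nn_integral_cmult_indicator[OF cball_sets])
    finally show ?thesis .
  qed
  then show ?thesis
    unfolding frac_max_eq_SUP_kernel[OF sets] by (intro SUP_least) simp
qed

lemma frac_max_ge:
  fixes \<mu> :: "'a::euclidean_space measure"
  assumes sets: "sets \<mu> = sets borel" and r: "0 \<le> r" and x: "x \<noteq> 0"
  shows "ennreal (kernel_const * (norm x + r) powr - \<beta>) * emeasure \<mu> (cball 0 r) \<le>
    frac_max (real DIM('a) - \<beta>) \<Phi> \<mu> x"
proof -
  define s where "s = norm x + r"
  have s: "0 < s" using r x by (simp add: s_def add_pos_nonneg)
  have "ennreal (kernel \<rho> s) * emeasure \<mu> (cball 0 r) \<le> (\<integral>\<^sup>+z. ennreal (kernel \<rho> (norm (x - z))) \<partial>\<mu>)"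
    if "0 < \<rho>" for \<rho>
  proof -
    have "ennreal (kernel \<rho> s) * indicator (cball 0 r) z \<le> ennreal (kernel \<rho> (norm (x - z)))" for z
    proof (cases "z \<in> cball 0 r")
      case True
      then have "norm (x - z) \<le> s"
        using norm_triangle_ineq4[of x z] by (simp add: s_def)
      then show ?thesis using True that by (simp add: ennreal_leI kernel_antimono)
    qed simp
    then have "(\<integral>\<^sup>+z. ennreal (kernel \<rho> s) * indicator (cball 0 r) z \<partial>\<mu>) \<le> (\<integral>\<^sup>+z. ennreal (kernel \<rho> (norm (x - z))) \<partial>\<mu>)"
      by (rule nn_integral_mono)
    moreover have "cball 0 r \<in> sets \<mu>" unfolding sets by simp
    ultimately show ?thesis by (simp add: nn_integral_cmult_indicator)
  qed
  then have "(SUP \<rho>\<in>{0<..}. ennreal (kernel \<rho> s) * emeasure \<mu> (cball 0 r)) \<le> frac_max (real DIM('a) - \<beta>) \<Phi> \<mu> x"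
    unfolding frac_max_eq_SUP_kernel[OF sets] by (intro SUP_mono) (use greaterThan_iff in blast)
  moreover have "ennreal (kernel_const * s powr - \<beta>) = (SUP \<rho>\<in>{0<..}. ennreal (kernel \<rho> s))"
    using s by (simp add: SUP_kernel[symmetric] ennreal_cSup bdd_above_kernel image_image)
  ultimately show ?thesis by (simp add: s_def SUP_mult_right_ennreal)
qed

text \<open>If \<open>|y| \<le> h|x|\<close> then \<open>|x - y|\<^sup>-\<^sup>\<beta>\<close> lies between \<open>(1+h)\<^sup>-\<^sup>\<beta> |x|\<^sup>-\<^sup>\<beta>\<close> and
  \<open>(1-h)\<^sup>-\<^sup>\<beta> |x|\<^sup>-\<^sup>\<beta>\<close>; the distortion is the relative width of this range.\<close>

definition kernel_distortion :: "real \<Rightarrow> real" where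
  "kernel_distortion h = (1 - h) powr - \<beta> - (1 + h) powr - \<beta>"

lemma kernel_distortion_nonneg:
  assumes "0 \<le> h" "h < 1"
  shows "0 \<le> kernel_distortion h"
proof -
  have "(1 + h) powr - \<beta> \<le> 1 powr - \<beta>" "1 powr - \<beta> \<le> (1 - h) powr - \<beta>"
    using assms exponent_pos by (intro powr_mono2'; simp)+
  then show ?thesis by (simp add: kernel_distortion_def)
qed

lemma kernel_distortion_0 [simp]: "kernel_distortion 0 = 0"
  by (simp add: kernel_distortion_def)

lemma isCont_kernel_distortion: "isCont kernel_distortion 0"
  unfolding kernel_distortion_def by (intro continuous_intros) auto

lemma frac_max_le_scaled:
  fixes \<mu> :: "'a::euclidean_space measure"
  assumes sets: "sets \<mu> = sets borel" and m: "emeasure \<mu> UNIV = ennreal m" "0 \<le> m"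
    and r: "0 \<le> r" "r \<le> h * norm x" and h: "0 \<le> h" "h < 1" and x: "x \<noteq> 0"
  shows "frac_max (real DIM('a) - \<beta>) \<Phi> \<mu> x \<le>
    ennreal (kernel_const * norm x powr - \<beta> * (1 - h) powr - \<beta> * m) +
    (\<integral>\<^sup>+z. majorant (x - z) * indicator (- cball 0 r) z \<partial>\<mu>)"
proof -
  have hx: "0 < norm x * (1 - h)" "norm x * (1 - h) \<le> norm x - r"
    using r h x by (auto simp: algebra_simps)
  then have "kernel_const * (norm x - r) powr - \<beta> \<le> kernel_const * (norm x * (1 - h)) powr - \<beta>"
    using exponent_pos kernel_const_nonneg by (intro mult_left_mono powr_mono2') auto
  also have "\<dots> = kernel_const * norm x powr - \<beta> * (1 - h) powr - \<beta>"
    using hx h by (simp add: powr_mult)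
  finally have "ennreal (kernel_const * (norm x - r) powr - \<beta>) * emeasure \<mu> (cball 0 r) \<le>
      ennreal (kernel_const * norm x powr - \<beta> * (1 - h) powr - \<beta>) * ennreal m"
  proof (rule mult_mono[OF ennreal_leI])
    show "emeasure \<mu> (cball 0 r) \<le> ennreal m"
      unfolding m(1)[symmetric] by (rule emeasure_mono) (simp_all add: sets)
  qed simp_all
  also have "\<dots> = ennreal (kernel_const * norm x powr - \<beta> * (1 - h) powr - \<beta> * m)"
    using kernel_const_nonneg m(2) by (simp add: ennreal_mult)
  finally have near: "ennreal (kernel_const * (norm x - r) powr - \<beta>) * emeasure \<mu> (cball 0 r) \<le>
      ennreal (kernel_const * norm x powr - \<beta> * (1 - h) powr - \<beta> * m)" .
  have "r < norm x" using hx by linarith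
  then show ?thesis
    using frac_max_le[OF sets r(1)] near by (meson add_right_mono order_trans)
qed

lemma frac_max_ge_scaled:
  fixes \<mu> :: "'a::euclidean_space measure"
  assumes sets: "sets \<mu> = sets borel" and m: "emeasure \<mu> UNIV = ennreal m"
    and tail: "emeasure \<mu> (- cball 0 r) \<le> ennreal e" "0 \<le> e"
    and r: "0 \<le> r" "r \<le> h * norm x" and h: "0 \<le> h" and x: "x \<noteq> 0"
  shows "ennreal (kernel_const * norm x powr - \<beta> * (1 + h) powr - \<beta> * (m - e)) \<le>
    frac_max (real DIM('a) - \<beta>) \<Phi> \<mu> x"
proof -
  have hx: "0 < norm x + r" "norm x + r \<le> norm x * (1 + h)"
    using r x by (auto intro: add_nonneg_pos simp: algebra_simps)
  have "kernel_const * norm x powr - \<beta> * (1 + h) powr - \<beta> = kernel_const * (norm x * (1 + h)) powr - \<beta>"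
    using h by (simp add: powr_mult)
  also have "\<dots> \<le> kernel_const * (norm x + r) powr - \<beta>"
    using hx exponent_pos kernel_const_nonneg by (intro mult_left_mono powr_mono2') auto
  finally have factor: "kernel_const * norm x powr - \<beta> * (1 + h) powr - \<beta> \<le> kernel_const * (norm x + r) powr - \<beta>" .
  have "emeasure \<mu> (cball 0 r) + emeasure \<mu> (- cball 0 r) = ennreal m"
    unfolding m[symmetric] by (subst plus_emeasure) (simp_all add: sets)
  then have "ennreal m \<le> ennreal e + emeasure \<mu> (cball 0 r)"
    using tail(1) by (metis add.commute add_left_mono)
  then have ball: "ennreal (m - e) \<le> emeasure \<mu> (cball 0 r)"
    using tail(2) by (simp add: ennreal_minus[symmetric] ennreal_minus_le_iff)
  have "ennreal (kernel_const * norm x powr - \<beta> * (1 + h) powr - \<beta> * (m - e)) =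
      ennreal (kernel_const * norm x powr - \<beta> * (1 + h) powr - \<beta>) * ennreal (m - e)"
    using kernel_const_nonneg by (subst ennreal_mult') simp_all
  also have "\<dots> \<le> ennreal (kernel_const * (norm x + r) powr - \<beta>) * emeasure \<mu> (cball 0 r)"
    by (rule mult_mono[OF ennreal_leI[OF factor] ball]) simp_all
  also have "\<dots> \<le> frac_max (real DIM('a) - \<beta>) \<Phi> \<mu> x"
    by (rule frac_max_ge[OF sets r(1) x])
  finally show ?thesis .
qed

lemma frac_max_deviation_split:
  fixes \<mu> :: "'a::euclidean_space measure"
  assumes sets: "sets \<mu> = sets borel" and m: "emeasure \<mu> UNIV = ennreal m" "0 \<le> m"
    and tail: "emeasure \<mu> (- cball 0 r) \<le> ennreal e" "0 \<le> e"
    and r: "0 \<le> r" "r \<le> h * norm x" and h: "0 \<le> h" "h < 1" and x: "x \<noteq> 0" and l: "0 < l"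
    and gt: "ereal l < \<bar>enn2ereal (frac_max (real DIM('a) - \<beta>) \<Phi> \<mu> x) -
      ereal (kernel_const * norm x powr - \<beta>) * ereal m\<bar>"
  shows "l / 2 < kernel_const * (kernel_distortion h * m + e) * norm x powr - \<beta> \<or>
    ennreal (l / 2) < (\<integral>\<^sup>+z. majorant (x - z) * indicator (- cball 0 r) z \<partial>\<mu>)"
proof -
  define a where "a = kernel_const * norm x powr - \<beta>"
  define P where "P = (1 - h) powr - \<beta>"
  define Q where "Q = (1 + h) powr - \<beta>"
  have a: "0 \<le> a" using kernel_const_nonneg by (simp add: a_def)
  have P: "1 \<le> P" using h exponent_pos powr_mono2'[of "- \<beta>" "1 - h" 1] by (simp add: P_def)
  have Q: "0 \<le> Q" "Q \<le> 1" using h exponent_pos powr_mono2'[of "- \<beta>" 1 "1 + h"] by (simp_all add: Q_def)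
  have "a * (P - 1) * m \<le> a * (P - Q) * m" "a * (1 - Q) * m \<le> a * (P - Q) * m"
    using a m(2) P Q by (intro mult_right_mono mult_left_mono; simp)+
  moreover have "a * Q * e \<le> a * e" "0 \<le> a * e"
    using a Q tail(2) by (simp_all add: mult.assoc mult_left_mono mult_left_le_one_le)
  moreover have "a * P * m - a * m = a * (P - 1) * m" "a * m - a * Q * (m - e) = a * (1 - Q) * m + a * Q * e"
    "a * ((P - Q) * m + e) = a * (P - Q) * m + a * e"
    by (simp_all add: algebra_simps)
  ultimately have E: "a * P * m - a * m \<le> a * ((P - Q) * m + e)" "a * m - a * Q * (m - e) \<le> a * ((P - Q) * m + e)"
    by linarith+
  have "frac_max (real DIM('a) - \<beta>) \<Phi> \<mu> x \<le> ennreal (a * P * m) +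
      (\<integral>\<^sup>+z. majorant (x - z) * indicator (- cball 0 r) z \<partial>\<mu>)"
    using frac_max_le_scaled[OF sets m r h x] by (simp add: a_def P_def)
  moreover have "ennreal (a * Q * (m - e)) \<le> frac_max (real DIM('a) - \<beta>) \<Phi> \<mu> x"
    using frac_max_ge_scaled[OF sets m(1) tail r h(1) x] by (simp add: a_def Q_def)
  moreover have "ereal l < \<bar>enn2ereal (frac_max (real DIM('a) - \<beta>) \<Phi> \<mu> x) - ereal (a * m)\<bar>"
    using gt by (simp add: a_def)
  ultimately have "l / 2 < a * ((P - Q) * m + e) \<or>
      ennreal (l / 2) < (\<integral>\<^sup>+z. majorant (x - z) * indicator (- cball 0 r) z \<partial>\<mu>)"
    using enn2ereal_abs_diff_split E a P m(2) l by simp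
  then show ?thesis by (simp add: a_def P_def Q_def kernel_distortion_def mult_ac)
qed

subsection \<open>Weak type estimate for the potential of the majorant\<close>

definition ball_const :: "nat \<Rightarrow> real" where
  "ball_const n = kernel_const * unit_ball_vol (real n) * 2 powr \<beta> / (1 - 2 powr (\<beta> - real n))"

definition weak_const :: "nat \<Rightarrow> real" where
  "weak_const n = 2 * ball_const n * (2 * (kernel_const + 1)) powr ((real n - \<beta>) / \<beta>)"

lemma ball_const_nonneg: "\<beta> < real n \<Longrightarrow> 0 \<le> ball_const n"
  using kernel_const_nonneg by (simp add: ball_const_def powr_less_one less_imp_le)

lemma weak_const_nonneg: "\<beta> < real n \<Longrightarrow> 0 \<le> weak_const n"
  by (simp add: weak_const_def ball_const_nonneg)

lemma majorant_indicator_ball_le_suminf: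
  assumes \<delta>: "0 < \<delta>" and z: "z \<noteq> 0"
  shows "majorant z * indicator (ball 0 \<delta>) z \<le>
    (\<Sum>k. ennreal (kernel_const * (\<delta> / 2 ^ Suc k) powr - \<beta>) * indicator (ball 0 (\<delta> / 2 ^ k)) z)"
proof (cases "z \<in> ball 0 \<delta>")
  case True
  obtain k where k: "\<delta> / 2 ^ Suc k \<le> norm z" "norm z < \<delta> / 2 ^ k"
    using dyadic_shell_exists[of "norm z" \<delta>] z True by auto
  then have "majorant z * indicator (ball 0 \<delta>) z \<le>
      ennreal (kernel_const * (\<delta> / 2 ^ Suc k) powr - \<beta>) * indicator (ball 0 (\<delta> / 2 ^ k)) z"
    using True \<delta> by (simp add: majorant_le)
  also have "\<dots> \<le> (\<Sum>k. ennreal (kernel_const * (\<delta> / 2 ^ Suc k) powr - \<beta>) * indicator (ball 0 (\<delta> / 2 ^ k)) z)"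
    by (rule ennreal_le_suminf)
  finally show ?thesis .
qed simp

lemma nn_integral_majorant_ball:
  assumes \<beta>: "\<beta> < real DIM('a::euclidean_space)" and \<delta>: "0 < \<delta>"
  shows "(\<integral>\<^sup>+z. majorant z * indicator (ball (0::'a) \<delta>) z \<partial>lborel) \<le>
    ennreal (ball_const DIM('a) * \<delta> powr (real DIM('a) - \<beta>))"
proof -
  define c where "c k = kernel_const * (\<delta> / 2 ^ Suc k) powr - \<beta>" for k :: nat
  define q where "q = 2 powr (\<beta> - real DIM('a))"
  define A where "A = kernel_const * unit_ball_vol (real DIM('a)) * 2 powr \<beta> * \<delta> powr (real DIM('a) - \<beta>)"
  have q: "0 < q" "q < 1"
    using \<beta> by (auto simp: q_def powr_less_one)
  have A: "0 \<le> A"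
    using kernel_const_nonneg by (simp add: A_def)
  have ball_term: "ennreal (c k) * emeasure lborel (ball (0::'a) (\<delta> / 2 ^ k)) = ennreal (A * q ^ k)" for k
  proof -
    have "c k * (unit_ball_vol (real DIM('a)) * (\<delta> / 2 ^ k) ^ DIM('a)) =
        kernel_const * unit_ball_vol (real DIM('a)) * ((\<delta> / 2 ^ Suc k) powr - \<beta> * (\<delta> / 2 ^ k) ^ DIM('a))"
      by (simp only: c_def mult_ac)
    also have "\<dots> = A * q ^ k"
      unfolding dyadic_ball_term[OF \<delta>] A_def q_def by (simp only: mult_ac)
    finally show ?thesis
      using \<delta> kernel_const_nonneg by (simp add: emeasure_ball c_def ennreal_mult[symmetric])
  qed
  have "(\<integral>\<^sup>+z. majorant z * indicator (ball (0::'a) \<delta>) z \<partial>lborel)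
      \<le> (\<integral>\<^sup>+z. (\<Sum>k. ennreal (c k) * indicator (ball (0::'a) (\<delta> / 2 ^ k)) z) \<partial>lborel)"
  proof (rule nn_integral_mono_AE)
    show "AE z in lborel. majorant z * indicator (ball (0::'a) \<delta>) z \<le>
        (\<Sum>k. ennreal (c k) * indicator (ball 0 (\<delta> / 2 ^ k)) z)"
      using AE_lborel_singleton[of "0::'a"]
      by eventually_elim (unfold c_def, rule majorant_indicator_ball_le_suminf[OF \<delta>])
  qed
  also have "\<dots> = (\<Sum>k. ennreal (A * q ^ k))"
    by (subst nn_integral_suminf,
        intro borel_measurable_times_ennreal measurable_const borel_measurable_indicator)
      (simp_all add: nn_integral_cmult_indicator ball_term)
  also have "\<dots> = ennreal (A / (1 - q))"
    using q A by (simp add: suminf_ennreal2 summable_geometric suminf_geometric suminf_mult)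
  finally show ?thesis by (simp add: A_def q_def ball_const_def mult_ac)
qed

lemma nn_integral_majorant_le_truncated:
  fixes \<mu> :: "'a::euclidean_space measure"
  assumes sets: "sets \<mu> = sets borel" and S[measurable]: "S \<in> sets borel" and \<delta>: "0 < \<delta>"
  shows "(\<integral>\<^sup>+z. majorant (x - z) * indicator S z \<partial>\<mu>) \<le>
    (\<integral>\<^sup>+z. majorant (x - z) * indicator (ball 0 \<delta>) (x - z) * indicator S z \<partial>\<mu>) +
    ennreal (kernel_const * \<delta> powr - \<beta>) * emeasure \<mu> S"
proof -
  have S_sets: "S \<in> sets \<mu>" using S unfolding sets .
  have [measurable]: "ball (0::'a) \<delta> \<in> sets borel" by simp
  have near_meas: "(\<lambda>z. majorant (x - z) * indicator (ball 0 \<delta>) (x - z) * indicator S z) \<in> borel_measurable \<mu>"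
    unfolding measurable_cong_sets[OF sets refl] by measurable
  have far_meas: "(\<lambda>z. ennreal (kernel_const * \<delta> powr - \<beta>) * indicator S z) \<in> borel_measurable \<mu>"
    using S_sets by (intro borel_measurable_times_ennreal measurable_const borel_measurable_indicator) simp_all
  have "majorant (x - z) * indicator S z \<le>
      majorant (x - z) * indicator (ball 0 \<delta>) (x - z) * indicator S z + ennreal (kernel_const * \<delta> powr - \<beta>) * indicator S z"
    for z
  proof (cases "x - z \<in> ball 0 \<delta>")
    case False
    then have "majorant (x - z) \<le> ennreal (kernel_const * \<delta> powr - \<beta>)"
      using \<delta> by (intro majorant_le) auto
    then show ?thesis using False by (simp add: mult_right_mono)
  qed simp
  then have "(\<integral>\<^sup>+z. majorant (x - z) * indicator S z \<partial>\<mu>) \<le>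
      (\<integral>\<^sup>+z. majorant (x - z) * indicator (ball 0 \<delta>) (x - z) * indicator S z +
        ennreal (kernel_const * \<delta> powr - \<beta>) * indicator S z \<partial>\<mu>)"
    by (rule nn_integral_mono)
  also have "\<dots> = (\<integral>\<^sup>+z. majorant (x - z) * indicator (ball 0 \<delta>) (x - z) * indicator S z \<partial>\<mu>) +
      ennreal (kernel_const * \<delta> powr - \<beta>) * emeasure \<mu> S"
    by (simp only: nn_integral_add[OF near_meas far_meas] nn_integral_cmult_indicator[OF S_sets])
  finally show ?thesis .
qed

lemma emeasure_potential_greater_le:
  fixes \<mu> :: "'a::euclidean_space measure"
  assumes \<beta>: "\<beta> < real DIM('a)" and sets: "sets \<mu> = sets borel" and "sigma_finite_measure \<mu>"
    and S[measurable]: "S \<in> sets borel" and \<delta>: "0 < \<delta>" and l: "0 < l"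
    and far: "ennreal (kernel_const * \<delta> powr - \<beta>) * emeasure \<mu> S \<le> ennreal (l / 2)"
  shows "emeasure lborel {x. ennreal l < (\<integral>\<^sup>+z. majorant (x - z) * indicator S z \<partial>\<mu>)} \<le>
    ennreal (2 / l) * (ennreal (ball_const DIM('a) * \<delta> powr (real DIM('a) - \<beta>)) * emeasure \<mu> S)"
proof -
  define G where "G z = majorant z * indicator (ball (0::'a) \<delta>) z" for z
  have [measurable]: "ball (0::'a) \<delta> \<in> sets borel" by simp
  have [measurable]: "G \<in> borel_measurable borel" unfolding G_def by measurable
  have "{x. ennreal l < (\<integral>\<^sup>+z. majorant (x - z) * indicator S z \<partial>\<mu>)} \<subseteq>
      {x. ennreal (l / 2) \<le> (\<integral>\<^sup>+z. G (x - z) * indicator S z \<partial>\<mu>)}"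
  proof safe
    fix x assume "ennreal l < (\<integral>\<^sup>+z. majorant (x - z) * indicator S z \<partial>\<mu>)"
    also have "\<dots> \<le> (\<integral>\<^sup>+z. G (x - z) * indicator S z \<partial>\<mu>) + ennreal (l / 2)"
      using nn_integral_majorant_le_truncated[OF sets S \<delta>, of x] far
      by (simp add: G_def) (meson add_left_mono order_trans)
    finally show "ennreal (l / 2) \<le> (\<integral>\<^sup>+z. G (x - z) * indicator S z \<partial>\<mu>)"
      using l by (intro ennreal_half_le_of_less_add) simp_all
  qed
  moreover have [measurable]: "(\<lambda>x. \<integral>\<^sup>+z. G (x - z) * indicator S z \<partial>\<mu>) \<in> borel_measurable borel"
    using assms by (intro borel_measurable_convolution) simp_all
  ultimately have "emeasure lborel {x. ennreal l < (\<integral>\<^sup>+z. majorant (x - z) * indicator S z \<partial>\<mu>)} \<le>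
      emeasure lborel {x. ennreal (l / 2) \<le> (\<integral>\<^sup>+z. G (x - z) * indicator S z \<partial>\<mu>)}"
    by (intro emeasure_mono) measurable
  also have "\<dots> \<le> ennreal (2 / l) * ((\<integral>\<^sup>+z. G z \<partial>lborel) * emeasure \<mu> S)"
    using emeasure_convolution_ge_le[of G \<mu> S "l / 2"] assms by simp
  also have "\<dots> \<le> ennreal (2 / l) * (ennreal (ball_const DIM('a) * \<delta> powr (real DIM('a) - \<beta>)) * emeasure \<mu> S)"
    unfolding G_def using \<beta> \<delta> by (intro mult_left_mono mult_right_mono nn_integral_majorant_ball) auto
  finally show ?thesis .
qed

lemma emeasure_potential_greater:
  fixes \<mu> :: "'a::euclidean_space measure"
  assumes \<beta>: "\<beta> < real DIM('a)" and sets: "sets \<mu> = sets borel" and fin: "finite_measure \<mu>"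
    and S[measurable]: "S \<in> sets borel" and e: "0 < e" "emeasure \<mu> S \<le> ennreal e" and l: "0 < l"
  shows "emeasure lborel {x. ennreal l < (\<integral>\<^sup>+z. majorant (x - z) * indicator S z \<partial>\<mu>)} \<le>
    ennreal (weak_const DIM('a) * (e / l) powr (real DIM('a) / \<beta>))"
proof -
  interpret finite_measure \<mu> by fact
  define K where "K = 2 * (kernel_const + 1)"
  \<comment> \<open>truncation radius at which the far part of the majorant contributes at most \<open>l/2\<close>\<close>
  define \<delta> where "\<delta> = (K * (e / l)) powr (1 / \<beta>)"
  have K: "0 < K" using kernel_const_nonneg by (simp add: K_def)
  have \<delta>: "0 < \<delta>" using K e l by (simp add: \<delta>_def)
  have \<delta>_pow: "\<delta> powr - \<beta> = l / (K * e)" "\<delta> powr (real DIM('a) - \<beta>) = (K * (e / l)) powr ((real DIM('a) - \<beta>) / \<beta>)"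
    using K e l exponent_pos by (simp_all only: \<delta>_def powr_powr) (simp_all add: powr_minus field_simps)
  have "kernel_const * \<delta> powr - \<beta> \<le> K / 2 * \<delta> powr - \<beta>"
    by (intro mult_right_mono) (simp_all add: K_def)
  also have "K / 2 * \<delta> powr - \<beta> = l / (2 * e)"
    using K e by (simp add: \<delta>_pow field_simps)
  finally have "kernel_const * \<delta> powr - \<beta> \<le> l / (2 * e)" .
  then have "ennreal (kernel_const * \<delta> powr - \<beta>) * emeasure \<mu> S \<le> ennreal (l / (2 * e)) * ennreal e"
    using e by (intro mult_mono ennreal_leI) auto
  also have "\<dots> = ennreal (l / 2)" using e l by (simp add: ennreal_mult[symmetric])
  finally have "emeasure lborel {x. ennreal l < (\<integral>\<^sup>+z. majorant (x - z) * indicator S z \<partial>\<mu>)} \<le>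
      ennreal (2 / l) * (ennreal (ball_const DIM('a) * \<delta> powr (real DIM('a) - \<beta>)) * emeasure \<mu> S)"
    by (rule emeasure_potential_greater_le[OF \<beta> sets sigma_finite_measure_axioms S \<delta> l])
  also have "\<dots> \<le> ennreal (2 / l) * (ennreal (ball_const DIM('a) * \<delta> powr (real DIM('a) - \<beta>)) * ennreal e)"
    using e by (intro mult_left_mono) auto
  also have "\<dots> = ennreal (2 / l * ball_const DIM('a) * \<delta> powr (real DIM('a) - \<beta>) * e)"
    using ball_const_nonneg[OF \<beta>] l e by (simp add: ennreal_mult[symmetric] mult.assoc)
  also have "2 / l * ball_const DIM('a) * \<delta> powr (real DIM('a) - \<beta>) * e =
      weak_const DIM('a) * (e / l) powr (real DIM('a) / \<beta>)"
  proof -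
    have "real DIM('a) / \<beta> = 1 + (real DIM('a) - \<beta>) / \<beta>"
      using exponent_pos by (simp add: field_simps)
    then have "(e / l) powr (real DIM('a) / \<beta>) = e / l * (e / l) powr ((real DIM('a) - \<beta>) / \<beta>)"
      using e l by (simp add: powr_add)
    moreover have "\<delta> powr (real DIM('a) - \<beta>) = K powr ((real DIM('a) - \<beta>) / \<beta>) * (e / l) powr ((real DIM('a) - \<beta>) / \<beta>)"
      unfolding \<delta>_pow(2) using K e l by (intro powr_mult)
    ultimately show ?thesis
      unfolding weak_const_def K_def[symmetric] using l by (simp add: field_simps)
  qed
  finally show ?thesis .
qed

subsection \<open>Weak norm of the deviation\<close>

lemma deviation_level_set_subset:
  fixes \<mu> :: "'a::euclidean_space measure"
  assumes sets: "sets \<mu> = sets borel" and m: "emeasure \<mu> UNIV = ennreal m" "0 \<le> m"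
    and tail: "emeasure \<mu> (- cball 0 r) \<le> ennreal e" "0 \<le> e"
    and r: "0 \<le> r" "r \<le> h * \<rho>" and h: "0 \<le> h" "h < 1" and \<rho>: "0 < \<rho>" and l: "0 < l"
  shows "{x \<in> - ball 0 \<rho>. ereal l < \<bar>enn2ereal (frac_max (real DIM('a) - \<beta>) \<Phi> \<mu> x) -
      ereal (kernel_const * norm x powr - \<beta>) * ereal m\<bar>} \<subseteq>
    ball 0 ((2 * (kernel_const * (kernel_distortion h * m + e)) / l) powr (1 / \<beta>)) \<union>
    {x. ennreal (l / 2) < (\<integral>\<^sup>+z. majorant (x - z) * indicator (- cball 0 r) z \<partial>\<mu>)}"
    (is "?S \<subseteq> ball 0 ((2 * ?c / l) powr (1 / \<beta>)) \<union> ?B")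
proof
  fix x assume x: "x \<in> ?S"
  then have nx: "\<rho> \<le> norm x" by simp
  with r h \<rho> have "r \<le> h * norm x" "x \<noteq> 0"
    by (auto intro: order_trans mult_left_mono)
  with x have "l / 2 < ?c * norm x powr - \<beta> \<or> x \<in> ?B"
    using frac_max_deviation_split[OF sets m tail r(1) _ h _ l] by (simp add: mult.assoc)
  then show "x \<in> ball 0 ((2 * ?c / l) powr (1 / \<beta>)) \<union> ?B"
  proof
    assume "l / 2 < ?c * norm x powr - \<beta>"
    then have "norm x < (?c / (l / 2)) powr (1 / \<beta>)"
      using nx \<rho> l exponent_pos by (intro less_powr_of_less_mult_powr) auto
    then show ?thesis by (simp add: mult.commute)
  qed simp
qed

lemma leb_outer_deviation_level_set:
  fixes \<mu> :: "'a::euclidean_space measure"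
  assumes \<beta>: "\<beta> < real DIM('a)" and sets: "sets \<mu> = sets borel" and fin: "finite_measure \<mu>"
    and m: "emeasure \<mu> UNIV = ennreal m" "0 \<le> m"
    and tail: "emeasure \<mu> (- cball 0 r) \<le> ennreal e" "0 < e"
    and r: "0 \<le> r" "r \<le> h * \<rho>" and h: "0 \<le> h" "h < 1" and \<rho>: "0 < \<rho>" and l: "0 < l"
  defines "c \<equiv> kernel_const * (kernel_distortion h * m + e)" and "p \<equiv> real DIM('a) / \<beta>"
  shows "leb_outer {x \<in> - ball 0 \<rho>. ereal l < \<bar>enn2ereal (frac_max (real DIM('a) - \<beta>) \<Phi> \<mu> x) -
      ereal (kernel_const * norm x powr - \<beta>) * ereal m\<bar>}
    \<le> ennreal ((unit_ball_vol (real DIM('a)) * (2 * c) powr p + weak_const DIM('a) * (2 * e) powr p) / l powr p)"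
proof -
  interpret finite_measure \<mu> by fact
  define B where "B = {x. ennreal (l / 2) < (\<integral>\<^sup>+z. majorant (x - z) * indicator (- cball 0 r) z \<partial>\<mu>)}"
  have c: "0 \<le> c"
    using kernel_const_nonneg kernel_distortion_nonneg[OF h] m(2) tail(2) by (simp add: c_def)
  have "(\<lambda>x. \<integral>\<^sup>+z. majorant (x - z) * indicator (- cball 0 r) z \<partial>\<mu>) \<in> borel_measurable borel"
    by (intro borel_measurable_convolution[OF borel_measurable_majorant _ sets sigma_finite_measure_axioms]) simp
  then have B_sets: "B \<in> sets borel" unfolding B_def by measurable
  have "{x \<in> - ball 0 \<rho>. ereal l < \<bar>enn2ereal (frac_max (real DIM('a) - \<beta>) \<Phi> \<mu> x) -
      ereal (kernel_const * norm x powr - \<beta>) * ereal m\<bar>} \<subseteq> ball 0 ((2 * c / l) powr (1 / \<beta>)) \<union> B"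
    using deviation_level_set_subset[OF sets m tail(1) less_imp_le[OF tail(2)] r h \<rho> l]
    unfolding B_def c_def .
  then have "leb_outer {x \<in> - ball 0 \<rho>. ereal l < \<bar>enn2ereal (frac_max (real DIM('a) - \<beta>) \<Phi> \<mu> x) -
      ereal (kernel_const * norm x powr - \<beta>) * ereal m\<bar>}
    \<le> emeasure lborel (ball 0 ((2 * c / l) powr (1 / \<beta>)) \<union> B)"
    by (rule leb_outer_le_emeasure) (intro sets.Un B_sets borel_open open_ball)
  also have "\<dots> \<le> emeasure lborel (ball (0::'a) ((2 * c / l) powr (1 / \<beta>))) + emeasure lborel B"
    using B_sets by (intro emeasure_subadditive) auto
  also have "((2 * c / l) powr (1 / \<beta>)) ^ DIM('a) = (2 * c / l) powr p"
    by (cases "c = 0") (use l in \<open>simp_all add: powr_power p_def\<close>)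
  then have "emeasure lborel (ball (0::'a) ((2 * c / l) powr (1 / \<beta>))) =
      ennreal (unit_ball_vol (real DIM('a)) * (2 * c / l) powr p)"
    by (simp add: emeasure_ball)
  also have "emeasure lborel B \<le> ennreal (weak_const DIM('a) * (e / (l / 2)) powr p)"
    unfolding B_def p_def
    by (rule emeasure_potential_greater[OF \<beta> sets fin _ tail(2,1)]) (use l in simp_all)
  also have "ennreal (unit_ball_vol (real DIM('a)) * (2 * c / l) powr p) +
      ennreal (weak_const DIM('a) * (e / (l / 2)) powr p) =
      ennreal ((unit_ball_vol (real DIM('a)) * (2 * c) powr p + weak_const DIM('a) * (2 * e) powr p) / l powr p)"
    using c l tail(2) weak_const_nonneg[OF \<beta>]
    by (simp add: ennreal_plus[symmetric] powr_divide add_divide_distrib mult.commute del: ennreal_plus)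
  finally show ?thesis by (simp add: add_left_mono)
qed

lemma weak_Lp_norm_deviation_le:
  fixes \<mu> :: "'a::euclidean_space measure"
  assumes \<beta>: "\<beta> < real DIM('a)" and sets: "sets \<mu> = sets borel" and fin: "finite_measure \<mu>"
    and m: "emeasure \<mu> UNIV = ennreal m" "0 \<le> m"
    and tail: "emeasure \<mu> (- cball 0 r) \<le> ennreal e" "0 < e"
    and r: "0 \<le> r" "r \<le> h * \<rho>" and h: "0 \<le> h" "h < 1" and \<rho>: "0 < \<rho>"
  defines "c \<equiv> kernel_const * (kernel_distortion h * m + e)"
  shows "weak_Lp_norm (real DIM('a) / \<beta>) (- ball 0 \<rho>)
      (\<lambda>x. \<bar>enn2ereal (frac_max (real DIM('a) - \<beta>) \<Phi> \<mu> x) - ereal (kernel_const * norm x powr - \<beta>) * ereal m\<bar>)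
    \<le> ennreal (2 * unit_ball_vol (real DIM('a)) powr (\<beta> / real DIM('a)) * c +
      2 * weak_const DIM('a) powr (\<beta> / real DIM('a)) * e)"
proof -
  define p where "p = real DIM('a) / \<beta>"
  define w where "w = unit_ball_vol (real DIM('a))"
  define D where "D = weak_const DIM('a)"
  have p: "0 < p" "1 / p = \<beta> / real DIM('a)" "\<beta> / real DIM('a) \<le> 1"
    using exponent_pos \<beta> by (simp_all add: p_def)
  have c: "0 \<le> c"
    using kernel_const_nonneg kernel_distortion_nonneg[OF h] m(2) tail(2) by (simp add: c_def)
  have D: "0 \<le> D" using weak_const_nonneg[OF \<beta>] by (simp add: D_def)
  have w: "0 \<le> w" by (simp add: w_def)
  have "weak_Lp_norm p (- ball 0 \<rho>)
      (\<lambda>x. \<bar>enn2ereal (frac_max (real DIM('a) - \<beta>) \<Phi> \<mu> x) - ereal (kernel_const * norm x powr - \<beta>) * ereal m\<bar>)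
    \<le> ennreal ((w * (2 * c) powr p + D * (2 * e) powr p) powr (1 / p))"
  proof (rule weak_Lp_norm_le)
    show "0 \<le> w * (2 * c) powr p + D * (2 * e) powr p" using c D w by simp
    show "leb_outer {x \<in> - ball 0 \<rho>. ereal l < \<bar>\<bar>enn2ereal (frac_max (real DIM('a) - \<beta>) \<Phi> \<mu> x) -
        ereal (kernel_const * norm x powr - \<beta>) * ereal m\<bar>\<bar>}
      \<le> ennreal ((w * (2 * c) powr p + D * (2 * e) powr p) / l powr p)" if "0 < l" for l
      using leb_outer_deviation_level_set[OF \<beta> sets fin m tail r h \<rho> that]
      unfolding c_def D_def p_def w_def by simp
  qed (fact p)
  also have "(w * (2 * c) powr p + D * (2 * e) powr p) powr (1 / p) \<le>
      (w * (2 * c) powr p) powr (1 / p) + (D * (2 * e) powr p) powr (1 / p)"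
    using c D w p tail(2) exponent_pos by (intro powr_add_le_add_powr) simp_all
  also have "\<dots> = 2 * w powr (\<beta> / real DIM('a)) * c + 2 * D powr (\<beta> / real DIM('a)) * e"
  proof -
    have "p * \<beta> / real DIM('a) = 1" using exponent_pos by (simp add: p_def)
    then show ?thesis using c D w p tail(2) by (simp add: powr_mult powr_powr)
  qed
  finally show ?thesis by (simp add: p_def w_def D_def ennreal_leI)
qed

lemma weak_Lp_norm_dilate_deviation_le:
  fixes V :: "'a::euclidean_space measure"
  assumes \<beta>: "\<beta> < real DIM('a)" and sets: "sets V = sets borel" and fin: "finite_measure V"
    and tail: "emeasure V (- cball 0 R) \<le> ennreal e" "0 < e" and R: "0 \<le> R"
    and \<rho>: "0 < \<rho>" and t: "0 < t" "t * R / \<rho> < 1"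
  shows "weak_Lp_norm (real DIM('a) / \<beta>) (- ball 0 \<rho>)
      (\<lambda>x. \<bar>enn2ereal (frac_max (real DIM('a) - \<beta>) \<Phi> (dilate_measure t V) x) -
        ereal (SUP r\<in>{0<..}. phi_scaled (real DIM('a) - \<beta>) \<Phi> r x) * enn2ereal (emeasure V UNIV)\<bar>)
    \<le> ennreal (2 * unit_ball_vol (real DIM('a)) powr (\<beta> / real DIM('a)) *
        (kernel_const * (kernel_distortion (t * R / \<rho>) * measure V UNIV + e)) +
      2 * weak_const DIM('a) powr (\<beta> / real DIM('a)) * e)"
proof -
  interpret finite_measure V by fact
  have m: "emeasure (dilate_measure t V) UNIV = ennreal (measure V UNIV)"
    using emeasure_dilate_measure_UNIV[OF sets] by (simp add: emeasure_eq_measure)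
  have "emeasure (dilate_measure t V) (- cball 0 (t * R)) \<le> ennreal e"
    using emeasure_dilate_measure_compl_cball[OF sets t(1)] tail(1) by simp
  note bound = weak_Lp_norm_deviation_le[OF \<beta> sets_dilate_measure finite_measure_dilate_measure[OF sets fin]
      m measure_nonneg this tail(2) _ _ _ t(2) \<rho>]
  have "weak_Lp_norm (real DIM('a) / \<beta>) (- ball 0 \<rho>)
      (\<lambda>x. \<bar>enn2ereal (frac_max (real DIM('a) - \<beta>) \<Phi> (dilate_measure t V) x) -
        ereal (SUP r\<in>{0<..}. phi_scaled (real DIM('a) - \<beta>) \<Phi> r x) * enn2ereal (emeasure V UNIV)\<bar>) =
    weak_Lp_norm (real DIM('a) / \<beta>) (- ball 0 \<rho>)
      (\<lambda>x. \<bar>enn2ereal (frac_max (real DIM('a) - \<beta>) \<Phi> (dilate_measure t V) x) -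
        ereal (kernel_const * norm x powr - \<beta>) * ereal (measure V UNIV)\<bar>)"
  proof (rule weak_Lp_norm_cong)
    fix x :: 'a assume "x \<in> - ball 0 \<rho>"
    then have "x \<noteq> 0" using \<rho> by auto
    then show "\<bar>enn2ereal (frac_max (real DIM('a) - \<beta>) \<Phi> (dilate_measure t V) x) -
        ereal (SUP r\<in>{0<..}. phi_scaled (real DIM('a) - \<beta>) \<Phi> r x) * enn2ereal (emeasure V UNIV)\<bar> =
      \<bar>enn2ereal (frac_max (real DIM('a) - \<beta>) \<Phi> (dilate_measure t V) x) -
        ereal (kernel_const * norm x powr - \<beta>) * ereal (measure V UNIV)\<bar>"
      by (simp add: SUP_phi_scaled emeasure_eq_measure)
  qed
  with bound show ?thesis using t R \<rho> by simp
qed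

lemma weak_Lp_norm_dilate_deviation_tendsto_0:
  fixes V :: "'a::euclidean_space measure"
  assumes \<beta>: "\<beta> < real DIM('a)" and sets: "sets V = sets borel" and fin: "finite_measure V" and \<rho>: "0 < \<rho>"
  shows "((\<lambda>t. weak_Lp_norm (real DIM('a) / \<beta>) (- ball 0 \<rho>)
      (\<lambda>x. \<bar>enn2ereal (frac_max (real DIM('a) - \<beta>) \<Phi> (dilate_measure t V) x) -
        ereal (SUP r\<in>{0<..}. phi_scaled (real DIM('a) - \<beta>) \<Phi> r x) * enn2ereal (emeasure V UNIV)\<bar>))
      \<longlongrightarrow> 0) (at_right 0)"
proof (rule tendsto_zero_ennreal)
  fix \<eta> :: real assume \<eta>: "0 < \<eta>"
  define K1 where "K1 = 2 * unit_ball_vol (real DIM('a)) powr (\<beta> / real DIM('a)) * kernel_const"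
  define K2 where "K2 = 2 * weak_const DIM('a) powr (\<beta> / real DIM('a))"
  define e where "e = \<eta> / (2 * (K1 + K2 + 1))"
  have K: "0 \<le> K1" "0 \<le> K2" using kernel_const_nonneg by (simp_all add: K1_def K2_def)
  have e: "0 < e" "(K1 + K2) * e < \<eta> / 2"
    using \<eta> K by (simp_all add: e_def field_simps)
  obtain R where R: "0 \<le> R" "emeasure V (- cball 0 R) < ennreal e"
    using finite_measure_compl_cball_small[OF sets fin e(1)] by blast
  have h: "((\<lambda>t. t * R / \<rho>) \<longlongrightarrow> 0) (at_right 0)"
    using \<rho> by (auto intro!: tendsto_eq_intros)
  have "((\<lambda>t. K1 * kernel_distortion (t * R / \<rho>) * measure V UNIV) \<longlongrightarrow> K1 * kernel_distortion 0 * measure V UNIV) (at_right 0)"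
    by (intro tendsto_intros isCont_tendsto_compose[OF isCont_kernel_distortion h])
  then have "\<forall>\<^sub>F t in at_right 0. K1 * kernel_distortion (t * R / \<rho>) * measure V UNIV < \<eta> / 2"
    using \<eta> by (intro order_tendstoD(2)) auto
  moreover have "\<forall>\<^sub>F t in at_right 0. t * R / \<rho> < 1"
    by (intro order_tendstoD(2)[OF h]) simp
  ultimately show "\<forall>\<^sub>F t in at_right 0. weak_Lp_norm (real DIM('a) / \<beta>) (- ball 0 \<rho>)
      (\<lambda>x. \<bar>enn2ereal (frac_max (real DIM('a) - \<beta>) \<Phi> (dilate_measure t V) x) -
        ereal (SUP r\<in>{0<..}. phi_scaled (real DIM('a) - \<beta>) \<Phi> r x) * enn2ereal (emeasure V UNIV)\<bar>)
      < ennreal \<eta>"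
    using eventually_at_right_less[of 0]
  proof eventually_elim
    case (elim t)
    have "K1 * kernel_distortion (t * R / \<rho>) * measure V UNIV + (K1 + K2) * e < \<eta>"
      using elim e by linarith
    then have "ennreal (2 * unit_ball_vol (real DIM('a)) powr (\<beta> / real DIM('a)) *
        (kernel_const * (kernel_distortion (t * R / \<rho>) * measure V UNIV + e)) +
        2 * weak_const DIM('a) powr (\<beta> / real DIM('a)) * e) < ennreal \<eta>"
      using \<eta> by (intro ennreal_lessI) (simp_all add: K1_def K2_def algebra_simps)
    with weak_Lp_norm_dilate_deviation_le[OF \<beta> sets fin less_imp_le[OF R(2)] e(1) R(1) \<rho>, of t] elim
    show ?case by (meson le_less_trans)
  qed
qed

end

lemma radial_kernel_phi_scaledI:
  fixes e1 :: "'a::euclidean_space"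
  assumes "\<alpha> < real DIM('a)"
    and "\<And>s. 0 \<le> s \<Longrightarrow> 0 \<le> \<Phi> s" "\<And>s s'. 0 \<le> s \<Longrightarrow> s \<le> s' \<Longrightarrow> \<Phi> s' \<le> \<Phi> s"
    and e1: "e1 \<in> Basis" and bdd: "bdd_above ((\<lambda>r. phi_scaled \<alpha> \<Phi> r e1) ` {0<..})"
  shows "radial_kernel \<Phi> (real DIM('a) - \<alpha>)"
proof
  have "(\<lambda>r. phi_scaled \<alpha> \<Phi> r e1) ` {0<..} = (\<lambda>r. r powr - (real DIM('a) - \<alpha>) * \<Phi> (1 / r)) ` {0<..}"
    using e1 by (intro image_cong) (simp_all add: phi_scaled_def divide_inverse)
  with bdd show "bdd_above ((\<lambda>r. r powr - (real DIM('a) - \<alpha>) * \<Phi> (1 / r)) ` {0<..})"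
    by simp
qed (use assms in auto)

theorem corollary2p4:
  fixes \<alpha> :: real and \<Phi> :: "real \<Rightarrow> real" and e1 :: "'a::euclidean_space"
    and V :: "'a measure" and \<rho> :: real
  assumes alpha: "0 < \<alpha>" "\<alpha> < real DIM('a)"
    and Phi_nonneg: "\<And>s. 0 \<le> s \<Longrightarrow> 0 \<le> \<Phi> s"
    and Phi_decr: "\<And>s s'. 0 \<le> s \<Longrightarrow> s \<le> s' \<Longrightarrow> \<Phi> s' \<le> \<Phi> s"
    and e1: "e1 \<in> Basis"
    and sup_fin: "bdd_above ((\<lambda>r. phi_scaled \<alpha> \<Phi> r e1) ` {0<..})"
    and V_sets: "sets V = sets lborel"
    and V_fin: "finite_measure V"
    and V_ac: "absolutely_continuous lborel V"
    and rho: "0 < \<rho>"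
  shows "((\<lambda>t. weak_Lp_norm (real DIM('a) / (real DIM('a) - \<alpha>)) (- ball 0 \<rho>)
            (\<lambda>x. \<bar>enn2ereal (frac_max \<alpha> \<Phi> (dilate_measure t V) x)
                 - ereal (Sup ((\<lambda>r. phi_scaled \<alpha> \<Phi> r x) ` {0<..})) * enn2ereal (emeasure V UNIV)\<bar>))
          \<longlongrightarrow> 0) (at_right 0)"
proof -
  interpret radial_kernel \<Phi> "real DIM('a) - \<alpha>"
    using radial_kernel_phi_scaledI[OF alpha(2) Phi_nonneg Phi_decr e1 sup_fin] .
  show ?thesis
    using weak_Lp_norm_dilate_deviation_tendsto_0[of V \<rho>] alpha V_sets V_fin rho by simp
qed

end
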